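(* Let $f:\mathbb{R}^n\times\mathbb{R}^m\to\mathbb{R}$ and $g:\mathbb{R}^n\times\mathbb{R}^m\to\mathbb{R}^p$ be continuous. Assume that for every $x\in\mathbb{R}^n$, $f(x,\cdot)$ is strictly convex, $g(x,\cdot)$ is convex (componentwise), and the problem $\min_{u\in\mathbb{R}^m} f(x,u)$ subject to $g(x,u)\le 0$ has at least one minimizer; let $u^*(x)$ denote the (unique) minimizer. Assume moreover that local compact feasibility holds at every $x\in\mathbb{R}^n$. Then $u^*:\mathbb{R}^n\to\mathbb{R}^m$ is measurable (with respect to the Borel $\sigma$-algebras).
   Context: Local compact feasibility (LCF) holds at $x\in\mathbb{R}^n$ if there exist a compact set $K\subset\mathbb{R}^m$ and $\delta>0$ such that for all $y\in\mathbb{R}^n$ with $\|y-x\|<\delta$ there exists $u\in K$ with $g(y,u)\le 0$. *)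

theory Defs
  imports "HOL-Analysis.Analysis"
begin

definition strictly_convex_on :: "'a::real_vector set \<Rightarrow> ('a \<Rightarrow> real) \<Rightarrow> bool" where
  "strictly_convex_on S h \<longleftrightarrow> convex S \<and>
     (\<forall>x\<in>S. \<forall>y\<in>S. x \<noteq> y \<longrightarrow> (\<forall>t::real. 0 < t \<and> t < 1 \<longrightarrow>
        h (t *\<^sub>R x + (1 - t) *\<^sub>R y) < t * h x + (1 - t) * h y))"

definition nonpos_vec :: "real^'p \<Rightarrow> bool" where
  "nonpos_vec v \<longleftrightarrow> (\<forall>i. v $ i \<le> 0)"

definition LCF :: "(real^'n \<Rightarrow> real^'m \<Rightarrow> real^'p) \<Rightarrow> real^'n \<Rightarrow> bool" where
  "LCF g x \<longleftrightarrow> (\<exists>K \<delta>. compact K \<and> \<delta> > 0 \<and>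
     (\<forall>y. norm (y - x) < \<delta> \<longrightarrow> (\<exists>u\<in>K. nonpos_vec (g y u))))"

definition is_minimizer :: "(real^'n \<Rightarrow> real^'m \<Rightarrow> real) \<Rightarrow> (real^'n \<Rightarrow> real^'m \<Rightarrow> real^'p)
    \<Rightarrow> real^'n \<Rightarrow> real^'m \<Rightarrow> bool" where
  "is_minimizer f g x u \<longleftrightarrow> nonpos_vec (g x u) \<and>
     (\<forall>v. nonpos_vec (g x v) \<longrightarrow> f x u \<le> f x v)"

end

theory Submission
  imports Defs
begin

text \<open>
  For a bounded open set \<open>B\<close>, the minimizer \<open>u\<^sup>*(x)\<close> lies in \<open>B\<close> iff some rational level \<open>r\<close>
  separates the feasible points of \<open>B\<close> from those of its frontier: some feasible point of \<open>B\<close>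
  has value below \<open>r\<close>, and every feasible point of \<open>frontier B\<close> has value above \<open>r\<close>.
  Necessity uses uniqueness of the minimizer and compactness of \<open>frontier B\<close>; sufficiency
  follows by convexity along the segment from that point to \<open>u\<^sup>*(x)\<close>, which would otherwise
  cross \<open>frontier B\<close>. Both level conditions describe projections of sets of the form
  closed \<open>\<inter>\<close> open in the product space; such sets are \<open>\<sigma>\<close>-compact, so their projections
  are Borel.
\<close>

lemma fst_image_closed_Int_open_borel:
  fixes A :: "('a::euclidean_space \<times> 'b::euclidean_space) set"
  assumes "closed A" "open U"
  shows "fst ` (A \<inter> U) \<in> sets borel"
proof -
  obtain C :: "nat \<Rightarrow> ('a \<times> 'b) set" where C: "\<And>n. compact (C n)" "\<Union>(range C) = U"
    using open_Union_compact_subsets[OF \<open>open U\<close>] by metis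
  have "fst ` (A \<inter> U) = (\<Union>n. fst ` (A \<inter> C n))"
    using C(2) by blast
  moreover have "fst ` (A \<inter> C n) \<in> sets borel" for n
    using closed_Int_compact[OF \<open>closed A\<close> C(1)]
    by (intro borel_closed compact_imp_closed compact_continuous_image continuous_on_fst continuous_on_id)
  ultimately show ?thesis
    by (metis (no_types) image_subsetI sets.countable_UN)
qed

lemma borel_measurableI_bounded_open:
  fixes f :: "'a \<Rightarrow> 'b::real_normed_vector"
  assumes "\<And>B. open B \<Longrightarrow> bounded B \<Longrightarrow> f -` B \<inter> space M \<in> sets M"
  shows "f \<in> borel_measurable M"
proof (rule borel_measurableI)
  fix S :: "'b set"
  assume "open S"
  have "f -` S \<inter> space M = (\<Union>N::nat. f -` (S \<inter> ball 0 (real N)) \<inter> space M)"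
    using reals_Archimedean2 by (fastforce simp: dist_norm)
  moreover have "f -` (S \<inter> ball 0 (real N)) \<inter> space M \<in> sets M" for N
    using \<open>open S\<close> by (intro assms) (auto simp: bounded_Int)
  ultimately show "f -` S \<inter> space M \<in> sets M"
    by (metis (no_types) image_subsetI sets.countable_UN)
qed

lemma strictly_convex_onD:
  assumes "strictly_convex_on S h" "x \<in> S" "y \<in> S" "x \<noteq> y" "0 < t" "t < 1"
  shows "h (t *\<^sub>R x + (1 - t) *\<^sub>R y) < t * h x + (1 - t) * h y"
  using assms unfolding strictly_convex_on_def by blast

lemma strictly_convex_on_imp_convex_on:
  assumes "strictly_convex_on S h"
  shows "convex_on S h"
proof (rule convex_onI)
  show "convex S"
    using assms by (simp add: strictly_convex_on_def)
  fix t :: real and x y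
  assume "0 < t" "t < 1" "x \<in> S" "y \<in> S"
  then show "h ((1 - t) *\<^sub>R x + t *\<^sub>R y) \<le> (1 - t) * h x + t * h y"
    using assms unfolding strictly_convex_on_def
    by (cases "x = y") (auto simp flip: scaleR_add_left simp: algebra_simps less_imp_le)
qed

lemma strictly_convex_on_minimizer_less:
  assumes h: "strictly_convex_on S h" and C: "C \<subseteq> S" "convex C"
    and "u \<in> C" and min: "\<And>w. w \<in> C \<Longrightarrow> h u \<le> h w"
    and "v \<in> C" "v \<noteq> u"
  shows "h u < h v"
proof (rule ccontr)
  assume "\<not> h u < h v"
  with min[OF \<open>v \<in> C\<close>] have "h v = h u"
    by linarith
  define w where "w = (1/2) *\<^sub>R v + (1 - 1/2) *\<^sub>R u"
  have "w \<in> C"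
    unfolding w_def using convexD[OF \<open>convex C\<close> \<open>v \<in> C\<close> \<open>u \<in> C\<close>] by simp
  moreover have "h w < h u"
    using strictly_convex_onD[OF h, of v u "1/2"] C \<open>u \<in> C\<close> \<open>v \<in> C\<close> \<open>v \<noteq> u\<close> \<open>h v = h u\<close>
    unfolding w_def by auto
  ultimately show False
    using min by (meson not_le)
qed

lemma convex_minimizer_mem_if_frontier_gap:
  fixes h :: "'a::real_normed_vector \<Rightarrow> real"
  assumes h: "convex_on C h"
    and "u \<in> C" and min: "\<And>v. v \<in> C \<Longrightarrow> h u \<le> h v"
    and "w \<in> B" "w \<in> C" "h w < r"
    and gap: "\<And>v. v \<in> frontier B \<Longrightarrow> v \<in> C \<Longrightarrow> r < h v"
  shows "u \<in> B"
proof (rule ccontr)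
  assume "u \<notin> B"
  then have "closed_segment w u \<inter> frontier B \<noteq> {}"
    using \<open>w \<in> B\<close> by (intro connected_Int_frontier) auto
  then obtain t where t: "0 \<le> t" "t \<le> 1" and fr: "(1 - t) *\<^sub>R w + t *\<^sub>R u \<in> frontier B"
    unfolding closed_segment_def by blast
  have "(1 - t) *\<^sub>R w + t *\<^sub>R u \<in> C"
    using convex_on_imp_convex[OF h] \<open>u \<in> C\<close> \<open>w \<in> C\<close> t unfolding convex_def by simp
  note on_frontier = gap[OF fr this]
  have "h ((1 - t) *\<^sub>R w + t *\<^sub>R u) \<le> (1 - t) * h w + t * h u"
    using convex_onD[OF h] t \<open>u \<in> C\<close> \<open>w \<in> C\<close> by blast
  also have "\<dots> \<le> (1 - t) * h w + t * h w"
    using min[OF \<open>w \<in> C\<close>] t by (simp add: mult_left_mono)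
  also have "\<dots> = h w"
    by (simp add: algebra_simps)
  finally show False
    using on_frontier \<open>h w < r\<close> by simp
qed

lemma strictly_convex_minimizer_frontier_gap:
  fixes h :: "'a::{real_normed_vector, heine_borel} \<Rightarrow> real"
  assumes h: "strictly_convex_on S h" "continuous_on C h"
    and C: "C \<subseteq> S" "convex C" "closed C" and "bounded B"
    and "u \<in> C" "u \<notin> frontier B" and min: "\<And>v. v \<in> C \<Longrightarrow> h u \<le> h v"
  shows "\<exists>c > h u. \<forall>v \<in> frontier B \<inter> C. c < h v"
proof (cases "frontier B \<inter> C = {}")
  case True
  then show ?thesis
    by (intro exI[of _ "h u + 1"]) auto
next
  case False
  have "compact (frontier B \<inter> C)"
    using \<open>bounded B\<close> \<open>closed C\<close> by (simp add: compact_Int_closed compact_frontier_bounded)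
  then obtain v0 where v0: "v0 \<in> frontier B \<inter> C" "\<And>v. v \<in> frontier B \<inter> C \<Longrightarrow> h v0 \<le> h v"
    using continuous_attains_inf[OF _ False] continuous_on_subset[OF h(2)] by (metis Int_lower2)
  then have "h u < h v0"
    using strictly_convex_on_minimizer_less[OF h(1) C(1,2) \<open>u \<in> C\<close> min] \<open>u \<notin> frontier B\<close>
    by blast
  then show ?thesis
    using v0 by (intro exI[of _ "(h u + h v0) / 2"]) force
qed

lemma strictly_convex_minimizer_in_open_iff:
  fixes h :: "'a::{real_normed_vector, heine_borel} \<Rightarrow> real"
  assumes h: "strictly_convex_on S h" "continuous_on C h"
    and C: "C \<subseteq> S" "convex C" "closed C" and B: "open B" "bounded B"
    and "u \<in> C" and min: "\<And>v. v \<in> C \<Longrightarrow> h u \<le> h v"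
  shows "u \<in> B \<longleftrightarrow>
    (\<exists>r::rat. (\<exists>w \<in> B \<inter> C. h w < of_rat r) \<and> \<not> (\<exists>v \<in> frontier B \<inter> C. h v \<le> of_rat r))"
proof
  assume "u \<in> B"
  then have "u \<notin> frontier B"
    using \<open>open B\<close> by (simp add: frontier_def interior_open)
  then obtain c where c: "h u < c" "\<forall>v \<in> frontier B \<inter> C. c < h v"
    using strictly_convex_minimizer_frontier_gap[OF h C B(2) \<open>u \<in> C\<close> _ min] by blast
  obtain r where "h u < of_rat r" "of_rat r < c"
    using of_rat_dense[OF c(1)] by blast
  with c(2) \<open>u \<in> B\<close> \<open>u \<in> C\<close> show "\<exists>r::rat. (\<exists>w \<in> B \<inter> C. h w < of_rat r) \<and>
      \<not> (\<exists>v \<in> frontier B \<inter> C. h v \<le> of_rat r)"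
    by force
next
  assume "\<exists>r::rat. (\<exists>w \<in> B \<inter> C. h w < of_rat r) \<and> \<not> (\<exists>v \<in> frontier B \<inter> C. h v \<le> of_rat r)"
  then obtain r w where "w \<in> B" "w \<in> C" "h w < of_rat r"
    and "\<And>v. v \<in> frontier B \<Longrightarrow> v \<in> C \<Longrightarrow> of_rat r < h v"
    by force
  moreover have "convex_on C h"
    using convex_on_subset[OF strictly_convex_on_imp_convex_on[OF h(1)] C(1,2)] .
  ultimately show "u \<in> B"
    using convex_minimizer_mem_if_frontier_gap \<open>u \<in> C\<close> min by blast
qed

lemma borel_measurable_strictly_convex_minimizer:
  fixes F :: "'a::euclidean_space \<Rightarrow> 'b::euclidean_space \<Rightarrow> real"
    and A :: "('a \<times> 'b) set" and m :: "'a \<Rightarrow> 'b"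
  assumes F_cont: "continuous_on UNIV (\<lambda>z. F (fst z) (snd z))"
    and F_sconv: "\<And>x. strictly_convex_on UNIV (F x)"
    and A_closed: "closed A" and A_conv: "\<And>x. convex (Pair x -` A)"
    and m_feas: "\<And>x. (x, m x) \<in> A" and m_min: "\<And>x u. (x, u) \<in> A \<Longrightarrow> F x (m x) \<le> F x u"
  shows "m \<in> borel_measurable borel"
proof (rule borel_measurableI_bounded_open)
  fix B :: "'b set"
  assume B: "open B" "bounded B"
  define P where "P r = fst ` (A \<inter> (snd -` B \<inter> {z. F (fst z) (snd z) < of_rat r}))" for r
  define Q where "Q r = fst ` (A \<inter> snd -` frontier B \<inter> {z. F (fst z) (snd z) \<le> of_rat r})" for r
  have "m x \<in> B \<longleftrightarrow> (\<exists>r. x \<in> P r - Q r)" for x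
  proof -
    have "continuous_on UNIV (F x)"
      using continuous_on_compose2[OF F_cont continuous_on_Pair[OF continuous_on_const continuous_on_id]]
      by simp
    moreover have "closed (Pair x -` A)"
      by (intro closed_vimage A_closed continuous_intros)
    moreover have "m x \<in> Pair x -` A" "\<And>v. v \<in> Pair x -` A \<Longrightarrow> F x (m x) \<le> F x v"
      using m_feas m_min by auto
    moreover have "x \<in> P r \<longleftrightarrow> (\<exists>w \<in> B \<inter> Pair x -` A. F x w < of_rat r)" for r
      unfolding P_def by force
    moreover have "x \<in> Q r \<longleftrightarrow> (\<exists>v \<in> frontier B \<inter> Pair x -` A. F x v \<le> of_rat r)" for r
      unfolding Q_def by force
    ultimately show ?thesis
      using strictly_convex_minimizer_in_open_iff[OF F_sconv[of x] _ subset_UNIV A_conv[of x] _ B]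
      by (simp add: continuous_on_subset)
  qed
  then have "m -` B = (\<Union>r. P r - Q r)"
    by blast
  moreover have "P r \<in> sets borel" for r
    unfolding P_def using A_closed B(1)
    by (intro fst_image_closed_Int_open_borel open_Int open_vimage_snd open_Collect_less
        continuous_on_const F_cont)
  moreover have "Q r \<in> sets borel" for r
  proof -
    have "closed (A \<inter> snd -` frontier B \<inter> {z. F (fst z) (snd z) \<le> of_rat r})"
      by (intro closed_Int A_closed closed_vimage_snd frontier_closed closed_Collect_le
          continuous_on_const F_cont)
    then show ?thesis
      using fst_image_closed_Int_open_borel[OF _ open_UNIV] unfolding Q_def by simp
  qed
  ultimately show "m -` B \<inter> space borel \<in> sets borel"
    by auto
qed

lemma convex_sublevel:
  assumes "convex_on S h"
  shows "convex {x \<in> S. h x \<le> c}"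
proof (rule convexI)
  fix x y and u v :: real
  assume "x \<in> {x \<in> S. h x \<le> c}" "y \<in> {x \<in> S. h x \<le> c}" "0 \<le> u" "0 \<le> v" "u + v = 1"
  then show "u *\<^sub>R x + v *\<^sub>R y \<in> {x \<in> S. h x \<le> c}"
    using convex_lower[OF assms, of x y u v] convex_on_imp_convex[OF assms]
    by (auto simp: convex_def)
qed

lemma convex_nonpos_vec:
  fixes G :: "'a::real_vector \<Rightarrow> real^'p"
  assumes "\<And>i. convex_on UNIV (\<lambda>u. G u $ i)"
  shows "convex {u. nonpos_vec (G u)}"
proof -
  have "{u. nonpos_vec (G u)} = (\<Inter>i. {u \<in> UNIV. G u $ i \<le> 0})"
    by (auto simp: nonpos_vec_def)
  then show ?thesis
    using convex_sublevel[OF assms] by (simp add: convex_INT)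
qed

lemma closed_nonpos_vec: "closed {v::real^'p. nonpos_vec v}"
proof -
  have "{v::real^'p. nonpos_vec v} = (\<Inter>i. {v. v $ i \<le> 0})"
    by (auto simp: nonpos_vec_def)
  then show ?thesis
    by (auto intro: closed_halfspace_component_le_cart)
qed

theorem proposition3p8:
  fixes f :: "real^'n \<Rightarrow> real^'m \<Rightarrow> real"
    and g :: "real^'n \<Rightarrow> real^'m \<Rightarrow> real^'p"
    and ustar :: "real^'n \<Rightarrow> real^'m"
  assumes f_cont: "continuous_on UNIV (\<lambda>z. f (fst z) (snd z))"
    and g_cont: "continuous_on UNIV (\<lambda>z. g (fst z) (snd z))"
    and f_sconv: "\<And>x. strictly_convex_on UNIV (f x)"
    and g_conv: "\<And>x i. convex_on UNIV (\<lambda>u. g x u $ i)"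
    and exists_min: "\<And>x. \<exists>u. is_minimizer f g x u"
    and ustar_min: "\<And>x. is_minimizer f g x (ustar x)"
    and lcf: "\<And>x. LCF g x"
  shows "ustar \<in> borel_measurable borel"
proof -
  \<comment> \<open>\<open>lcf\<close> and \<open>exists_min\<close> are unused: \<open>ustar_min\<close> already supplies the minimizers.\<close>
  let ?A = "{z. nonpos_vec (g (fst z) (snd z))}"
  have "closed ?A"
    using closed_vimage[OF closed_nonpos_vec g_cont] by (simp add: vimage_def)
  moreover have "convex (Pair x -` ?A)" for x
    using convex_nonpos_vec[OF g_conv] by (simp add: vimage_def)
  ultimately show ?thesis
    using ustar_min unfolding is_minimizer_def
    by (intro borel_measurable_strictly_convex_minimizer[OF f_cont f_sconv, where A = ?A]) auto
qed

end
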